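(* Let $K$ be a CMI and let $K'$ be a sub-CMI of $K$. For any joint distribution of $X_1,\dots,X_n$, if $K$ is valid then $K'$ is valid.
   Context: Setting: $X_1,\dots,X_n$ jointly distributed discrete random variables with $H(X_i)<\infty$; distribution unspecified. $X_\alpha=(X_i,i\in\alpha)$, $X_\emptyset$ constant. A CMI is $K=(C,\langle Q_1,\dots,Q_k\rangle)$, $k\ge0$, $C\subseteq\{1,\dots,n\}$, $\langle\cdot\rangle$ an unordered multiset of subsets; valid (for a given distribution) if $\sum_iH(X_{Q_i}|X_C)-H(X_{Q_1},\dots,X_{Q_k}|X_C)=0$. Empty members may be deleted. Degenerate = valid for every distribution; all degenerate CMIs are identified and written $(\cdot,\langle\ \rangle)$. $\mathrm{pur}(K)=(C,\langle Q_i\setminus C:Q_i\setminus C\ne\emptyset\rangle)$. For pure $K$: $\mathbb I_K$ = indices lying in at least two members of the collection if $k\ge2$, else $\emptyset$; $P_1,\dots,P_t$ the nonempty sets among $Q_i\setminus\mathbb I_K$; $\mathrm{can}(K)=(\cdot,\langle\ \rangle)$ if $k\le1$, $(C,\langle\mathbb I_K,\mathbb I_K\rangle)$ if $k\ge2,\mathbb I_K\ne\emptyset,t\le1$, $(C,\langle P_1..P_t\rangle)$ if $k\ge2,\mathbb I_K=\emptyset$, $(C,\langle\mathbb I_K,\mathbb I_K,P_1..P_t\rangle)$ if $k\ge2,\mathbb I_K\ne\emptyset,t\ge2$. For general $K$, $\mathbb I_K$ is the repeated-index set of $\mathrm{pur}(K)$ and $\mathrm{can}(\mathrm{pur}(K))$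 is written $(C,\langle\mathbb I_K,\mathbb I_K,P_i,1\le i\le t\rangle)$ (copies of $\mathbb I_K$ omitted if empty; degenerate $K$ has $\mathbb I_K=\emptyset$, $t\in\{0,1\}$). $P=\bigcup_iP_i$, $S=C\cup P$. $R_K^{K'}$: with $\mathrm{can}(\mathrm{pur}(K'))=(C',\langle\mathbb I_{K'},\mathbb I_{K'},P'_j,1\le j\le s\rangle)$, $D=\mathbb I_{K'}\setminus\mathbb I_K$ and $T_1,\dots,T_u$ the nonempty sets among $P'_j\setminus\mathbb I_K$: $R_K^{K'}=(\cdot,\langle\ \rangle)$ if $D=\emptyset,u\le1$; $(C'\setminus\mathbb I_K,\langle T_1..T_u\rangle)$ if $D=\emptyset,u\ge2$; $(C'\setminus\mathbb I_K,\langle D,D\rangle)$ if $D\ne\emptyset,u\le1$; $(C'\setminus\mathbb I_K,\langle D,D,T_1..T_u\rangle)$ if $D\ne\emptyset,u\ge2$. Sub-CMI: with $K''=R_K^{K'}$, $\mathrm{can}(\mathrm{pur}(K''))=(C'',\langle\mathbb I_{K''},\mathbb I_{K''},P''_j,1\le j\le r\rangle)$, $P''=\bigcup_jP''_j$, $K'$ is a sub-CMI of $K$ if: (i) $K'=(\cdot,\langle\ \rangle)$; or (ii) $\mathrm{can}(\mathrm{pur}(K''))=(\cdot,\langle\ \rangle)$ and $C\subseteq C'$; or (iii) $\mathrm{can}(\mathrm{pur}(K''))\ne(\cdot,\langle\ \rangle)$, $\mathbb I_{K''}=\emptyset$, $P''\subseteq P$, $C\subseteq C''\subseteq S\setminus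 P''$, and whenever $m_1\in P''_{j_1}$, $m_2\in P''_{j_2}$ with $j_1\ne j_2$, then $m_1\in P_{i_1}$, $m_2\in P_{i_2}$ with $i_1\ne i_2$. *)

theory Defs
  imports "HOL-Probability.Probability" "HOL-Library.Multiset"
begin

text \<open>A joint distribution: a probability mass function M on a sample space 'w,
  random variables X i :: 'w => 'v (i in {1..n}).  Entropy in bits.\<close>

definition ent :: "'w pmf \<Rightarrow> ('w \<Rightarrow> 'b) \<Rightarrow> real" where
  "ent M Y = infsum (\<lambda>y. - pmf (map_pmf Y M) y * log 2 (pmf (map_pmf Y M) y)) UNIV"

definition ent_finite :: "'w pmf \<Rightarrow> ('w \<Rightarrow> 'b) \<Rightarrow> bool" where
  "ent_finite M Y \<longleftrightarrow> (\<lambda>y. - pmf (map_pmf Y M) y * log 2 (pmf (map_pmf Y M) y)) summable_on UNIV"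

definition jointRV :: "(nat \<Rightarrow> 'w \<Rightarrow> 'v) \<Rightarrow> nat set \<Rightarrow> 'w \<Rightarrow> (nat \<Rightarrow> 'v)" where
  "jointRV X A w = restrict (\<lambda>i. X i w) A"

definition H :: "'w pmf \<Rightarrow> (nat \<Rightarrow> 'w \<Rightarrow> 'v) \<Rightarrow> nat set \<Rightarrow> real" where
  "H M X A = ent M (jointRV X A)"

definition condH :: "'w pmf \<Rightarrow> (nat \<Rightarrow> 'w \<Rightarrow> 'v) \<Rightarrow> nat set \<Rightarrow> nat set \<Rightarrow> real" where
  "condH M X A C = H M X (A \<union> C) - H M X C"

definition finite_entropies :: "nat \<Rightarrow> 'w pmf \<Rightarrow> (nat \<Rightarrow> 'w \<Rightarrow> 'v) \<Rightarrow> bool" where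
  "finite_entropies n M X \<longleftrightarrow> (\<forall>i\<in>{1..n}. ent_finite M (X i))"

text \<open>A CMI (C, <Q_1,...,Q_k>): a set C and a multiset of sets.\<close>
type_synonym cmi = "nat set \<times> nat set multiset"

definition wf_cmi :: "nat \<Rightarrow> cmi \<Rightarrow> bool" where
  "wf_cmi n K \<longleftrightarrow> fst K \<subseteq> {1..n} \<and> (\<forall>Q\<in>#snd K. Q \<subseteq> {1..n})"

text \<open>Validity: sum_i H(X_{Q_i}|X_C) - H(X_{Q_1},...,X_{Q_k}|X_C) = 0; the tuple
  (X_{Q_1},...,X_{Q_k}) is identified with X_{Q_1 \<union> ... \<union> Q_k}.\<close>
definition valid :: "'w pmf \<Rightarrow> (nat \<Rightarrow> 'w \<Rightarrow> 'v) \<Rightarrow> cmi \<Rightarrow> bool" where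
  "valid M X K \<longleftrightarrow>
     (\<Sum>Q\<in>#snd K. condH M X Q (fst K)) - condH M X (\<Union>(set_mset (snd K))) (fst K) = 0"

text \<open>Every
  discrete (countably supported) distribution is, up to injective relabelling of
  outcomes and values, a distribution on sample space nat with nat-valued variables.\<close>
definition degenerate :: "nat \<Rightarrow> cmi \<Rightarrow> bool" where
  "degenerate n K \<longleftrightarrow>
     (\<forall>(M :: nat pmf) (X :: nat \<Rightarrow> nat \<Rightarrow> nat). finite_entropies n M X \<longrightarrow> valid M X K)"

definition pur :: "cmi \<Rightarrow> cmi" where
  "pur K = (fst K, filter_mset (\<lambda>Q. Q \<noteq> {}) (image_mset (\<lambda>Q. Q - fst K) (snd K)))"

definition rep_idx :: "nat set multiset \<Rightarrow> nat set" where
  "rep_idx Qs = {i. 2 \<le> size (filter_mset (\<lambda>Q. i \<in> Q) Qs)}"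

definition parts :: "nat set \<Rightarrow> nat set multiset \<Rightarrow> nat set multiset" where
  "parts I Qs = filter_mset (\<lambda>P. P \<noteq> {}) (image_mset (\<lambda>Q. Q - I) Qs)"

text \<open>Canonical form of a pure CMI: None stands for the degenerate class (.,<>);
  Some (C, I, Ps) stands for (C, <I, I, P_1, ..., P_t>) (copies of I omitted if I is empty).\<close>
definition can_pure :: "cmi \<Rightarrow> (nat set \<times> nat set \<times> nat set multiset) option" where
  "can_pure K = (let C = fst K; Qs = snd K; I = rep_idx Qs; Ps = parts I Qs in
     if size Qs \<le> 1 then None
     else if I \<noteq> {} \<and> size Ps \<le> 1 then Some (C, I, {#})
     else Some (C, I, Ps))"

definition canK :: "cmi \<Rightarrow> (nat set \<times> nat set \<times> nat set multiset) option" where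
  "canK K = can_pure (pur K)"

definition IK :: "cmi \<Rightarrow> nat set" where
  "IK K = rep_idx (snd (pur K))"

text \<open>The P_i of K: those of can(pur(K)); for degenerate K (I_K empty, t in {0,1})
  the nonempty members of pur(K).\<close>
definition PK :: "cmi \<Rightarrow> nat set multiset" where
  "PK K = (case canK K of None \<Rightarrow> snd (pur K) | Some (_, _, Ps) \<Rightarrow> Ps)"

definition degCMI :: cmi where "degCMI = ({}, {#})"

definition RK :: "cmi \<Rightarrow> cmi \<Rightarrow> cmi" where
  "RK K K' = (let D = IK K' - IK K;
                  Ts = filter_mset (\<lambda>T. T \<noteq> {}) (image_mset (\<lambda>P. P - IK K) (PK K'));
                  C0 = fst K' - IK K in
     if D = {} \<and> size Ts \<le> 1 then degCMI
     else if D = {} then (C0, Ts)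
     else if size Ts \<le> 1 then (C0, {#D, D#})
     else (C0, {#D, D#} + Ts))"

definition sub_cmi :: "nat \<Rightarrow> cmi \<Rightarrow> cmi \<Rightarrow> bool" where
  "sub_cmi n K' K \<longleftrightarrow>
     degenerate n K' \<or>
     (let K'' = RK K K'; C = fst K; P = \<Union>(set_mset (PK K)); S = C \<union> P;
          C'' = fst K''; P'' = \<Union>(set_mset (PK K'')) in
       (canK K'' = None \<and> C \<subseteq> fst K') \<or>
       (canK K'' \<noteq> None \<and> IK K'' = {} \<and> P'' \<subseteq> P \<and> C \<subseteq> C'' \<and> C'' \<subseteq> S - P'' \<and>
        (\<forall>A B m1 m2. {#A, B#} \<subseteq># PK K'' \<longrightarrow> m1 \<in> A \<longrightarrow> m2 \<in> B \<longrightarrow>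
            (\<exists>A' B'. {#A', B'#} \<subseteq># PK K \<and> m1 \<in> A' \<and> m2 \<in> B'))))"

end

theory Submission
  imports Defs
begin

(* Entropy is a monotone submodular set function, and a CMI K = (C, <Q_i>) is valid exactly when the
   conditional total correlation of the X_{Q_i} given X_C vanishes; everything else is proved for an
   arbitrary monotone submodular g in place of entropy. Vanishing total correlation forces every
   index lying in two of the Q_i to be a function of X_C (so I_K is determined by C) and the blocks
   P_i of the canonical form to be conditionally independent given X_C. The sub-CMI conditions say
   that K' has no repeated indices outside I_K, that its condition contains C and stays inside
   C \<union> P, and that after deleting the determined indices I_K, indices in different members of K'
   lie in different blocks P_i. Grouping the blocks into those meeting one member of K' and the
   rest, conditional independence survives enlarging the condition within the blocks (weak union)
   and shrinking the two sides (monotonicity), so the total correlation of K' vanishes as well.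
   Degenerate K' are valid for every distribution on nat, and an injective relabelling of outcomes
   and values carries any discrete distribution there. *)

section \<open>Conditional mutual information of a monotone submodular function\<close>

lemma obtain_pair_subset_mset:
  assumes "2 \<le> size Ms"
  obtains A B where "{#A, B#} \<subseteq># Ms"
proof -
  from assms obtain A Ms' where Ms: "Ms = add_mset A Ms'" by (cases Ms) auto
  with assms obtain B Ms'' where "Ms' = add_mset B Ms''" by (cases Ms') auto
  then have "{#A, B#} \<subseteq># Ms" using Ms by simp
  then show ?thesis by (rule that)
qed

lemma size_filter_mset_ge_2:
  assumes "{#A, B#} \<subseteq># Ms" "P A" "P B"
  shows "2 \<le> size (filter_mset P Ms)"
  using size_mset_mono[OF multiset_filter_mono[OF assms(1), of P]] assms(2,3) by simp

lemma size_filter_mset_le_1_unique: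
  assumes "size (filter_mset P Ms) \<le> 1" "A \<in># Ms" "B \<in># Ms" "P A" "P B"
  shows "A = B"
proof (rule ccontr)
  assume "A \<noteq> B"
  have "A \<in># filter_mset P Ms" using assms by simp
  then obtain R where R: "filter_mset P Ms = add_mset A R" by (metis multi_member_split)
  have "B \<in># filter_mset P Ms" using assms by simp
  then have "B \<in># R" using R \<open>A \<noteq> B\<close> by simp
  then show False using R assms(1) by (cases R) auto
qed

(* The last requirement of clause (iii) in the definition of a sub-CMI. *)
definition keeps_apart :: "'a set multiset \<Rightarrow> 'a set multiset \<Rightarrow> bool" where
  "keeps_apart Ps Us \<longleftrightarrow> (\<forall>A B m1 m2. {#A, B#} \<subseteq># Us \<longrightarrow> m1 \<in> A \<longrightarrow> m2 \<in> B \<longrightarrow>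
     (\<exists>A' B'. {#A', B'#} \<subseteq># Ps \<and> m1 \<in> A' \<and> m2 \<in> B'))"

lemma keeps_apart_split:
  assumes disj: "\<And>m. size (filter_mset (\<lambda>P. m \<in> P) Ps) \<le> 1"
    and cover: "\<Union>(set_mset (add_mset U Rs)) \<subseteq> \<Union>(set_mset Ps)"
    and apart: "keeps_apart Ps (add_mset U Rs)"
  shows "U \<subseteq> \<Union>(set_mset (filter_mset (\<lambda>P. P \<inter> U \<noteq> {}) Ps))"
    and "\<Union>(set_mset Rs) \<subseteq> \<Union>(set_mset (filter_mset (\<lambda>P. \<not> P \<inter> U \<noteq> {}) Ps))"
proof -
  show "U \<subseteq> \<Union>(set_mset (filter_mset (\<lambda>P. P \<inter> U \<noteq> {}) Ps))"
  proof
    fix m assume "m \<in> U"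
    moreover obtain P where "P \<in># Ps" "m \<in> P" using cover \<open>m \<in> U\<close> by force
    ultimately show "m \<in> \<Union>(set_mset (filter_mset (\<lambda>P. P \<inter> U \<noteq> {}) Ps))" by auto
  qed
  show "\<Union>(set_mset Rs) \<subseteq> \<Union>(set_mset (filter_mset (\<lambda>P. \<not> P \<inter> U \<noteq> {}) Ps))"
  proof
    fix m2 assume "m2 \<in> \<Union>(set_mset Rs)"
    then obtain V where V: "V \<in># Rs" "m2 \<in> V" by blast
    then obtain P where P: "P \<in># Ps" "m2 \<in> P" using cover by force
    have "P \<inter> U = {}"
    proof (rule ccontr)
      assume "P \<inter> U \<noteq> {}"
      then obtain m1 where m1: "m1 \<in> P" "m1 \<in> U" by blast
      have "{#U, V#} \<subseteq># add_mset U Rs" using V by (simp add: mset_subset_eq_single)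
      then obtain A' B' where AB: "{#A', B'#} \<subseteq># Ps" "m1 \<in> A'" "m2 \<in> B'"
        using apart m1(2) V(2) unfolding keeps_apart_def by blast
      then have "B' \<in># Ps" by (auto dest: mset_subset_eqD)
      then have "B' = P" using size_filter_mset_le_1_unique[OF disj[of m2] _ P(1)] AB(3) P(2) by simp
      then show False
        using size_filter_mset_ge_2[OF AB(1), of "\<lambda>P. m1 \<in> P"] disj[of m1] AB m1 by simp
    qed
    then show "m2 \<in> \<Union>(set_mset (filter_mset (\<lambda>P. \<not> P \<inter> U \<noteq> {}) Ps))" using P by auto
  qed
qed

definition cond_mi :: "('a set \<Rightarrow> real) \<Rightarrow> 'a set \<Rightarrow> 'a set \<Rightarrow> 'a set \<Rightarrow> real" where
  "cond_mi g A B C = g (A \<union> C) + g (B \<union> C) - g (A \<union> B \<union> C) - g C"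

definition total_corr :: "('a set \<Rightarrow> real) \<Rightarrow> 'a set \<Rightarrow> 'a set multiset \<Rightarrow> real" where
  "total_corr g C Qs = (\<Sum>Q\<in>#Qs. g (Q \<union> C) - g C) - (g (\<Union>(set_mset Qs) \<union> C) - g C)"

locale mono_submodular =
  fixes g :: "'a set \<Rightarrow> real"
  assumes monotone: "A \<subseteq> B \<Longrightarrow> g A \<le> g B"
    and submodular: "g (A \<union> B \<union> C) + g C \<le> g (A \<union> C) + g (B \<union> C)"
begin

lemma cond_mi_nonneg: "0 \<le> cond_mi g A B C"
  using submodular[of A B C] by (simp add: cond_mi_def)

lemma cond_mi_commute: "cond_mi g A B C = cond_mi g B A C"
  by (simp add: cond_mi_def Un_ac)

lemma cond_mi_chain:
  assumes "Z \<subseteq> B"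
  shows "cond_mi g A B C = cond_mi g A Z C + cond_mi g A B (Z \<union> C)"
proof -
  have e: "B \<union> (Z \<union> C) = B \<union> C" "A \<union> B \<union> (Z \<union> C) = A \<union> B \<union> C" "A \<union> (Z \<union> C) = A \<union> Z \<union> C"
    using assms by auto
  show ?thesis unfolding cond_mi_def e by linarith
qed

lemma cond_mi_mono:
  assumes "A' \<subseteq> A" "B' \<subseteq> B"
  shows "cond_mi g A' B' C \<le> cond_mi g A B C"
proof -
  have left: "cond_mi g A' B C \<le> cond_mi g A B C" if "A' \<subseteq> A" for A' A B
  proof -
    have "cond_mi g B A C = cond_mi g B A' C + cond_mi g B A (A' \<union> C)"
      using that by (rule cond_mi_chain)
    then show ?thesis
      using cond_mi_nonneg[of B A "A' \<union> C"] cond_mi_commute[of A' B C] cond_mi_commute[of A B C]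
      by linarith
  qed
  show ?thesis
    using left[OF assms(1), of B] left[OF assms(2), of A'] cond_mi_commute[of A' B' C] cond_mi_commute[of A' B C]
    by linarith
qed

lemma total_corr_add_mset:
  "total_corr g C (add_mset Q Qs) = total_corr g C Qs + cond_mi g Q (\<Union>(set_mset Qs)) C"
  by (simp add: total_corr_def cond_mi_def Un_ac)

lemma total_corr_union:
  "total_corr g C (Xs + Ys) = total_corr g C Xs + total_corr g C Ys + cond_mi g (\<Union>(set_mset Xs)) (\<Union>(set_mset Ys)) C"
  by (simp add: total_corr_def cond_mi_def Un_ac)

lemma total_corr_pair: "total_corr g C {#A, B#} = cond_mi g A B C"
  by (simp add: total_corr_def cond_mi_def Un_ac)

lemma total_corr_size_le_1: "size Qs \<le> 1 \<Longrightarrow> total_corr g C Qs = 0"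
  by (cases Qs) (auto simp: total_corr_def)

lemma total_corr_nonneg: "0 \<le> total_corr g C Qs"
  by (induction Qs) (auto simp: total_corr_add_mset total_corr_size_le_1 intro: add_nonneg_nonneg cond_mi_nonneg)

lemma total_corr_subset_mset: "Qs \<subseteq># Ps \<Longrightarrow> total_corr g C Qs \<le> total_corr g C Ps"
  using total_corr_union[of C Qs "Ps - Qs"] total_corr_nonneg[of C "Ps - Qs"] cond_mi_nonneg
  by (metis le_add_same_cancel1 add_increasing2 subset_mset.add_diff_inverse)

lemma total_corr_filter_nonempty: "total_corr g C (filter_mset (\<lambda>Q. Q \<noteq> {}) Qs) = total_corr g C Qs"
proof (induction Qs)
  case empty
  then show ?case by simp
next
  case (add Q Qs)
  have "\<Union>(set_mset (filter_mset (\<lambda>Q. Q \<noteq> {}) Qs)) = \<Union>(set_mset Qs)" "cond_mi g {} B C = 0" for B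
    by (auto simp: cond_mi_def Un_ac)
  then show ?case using add by (simp add: total_corr_add_mset)
qed

lemma total_corr_diff_cond: "total_corr g C (image_mset (\<lambda>Q. Q - C) Qs) = total_corr g C Qs"
proof -
  have u: "\<Union>(set_mset (image_mset (\<lambda>Q. Q - C) Qs)) \<union> C = \<Union>(set_mset Qs) \<union> C" by auto
  have "\<And>Q. Q - C \<union> C = Q \<union> C" by auto
  then show ?thesis unfolding total_corr_def u by (simp add: multiset.map_comp comp_def)
qed

(* For entropy, g (C \<union> D) = g C says that X_D is a function of X_C. *)
lemma determined_extend:
  assumes "g (C \<union> D) = g C"
  shows "g (A \<union> C \<union> D) = g (A \<union> C)"
proof -
  have "g (A \<union> D \<union> C) + g C \<le> g (A \<union> C) + g (D \<union> C)" by (rule submodular)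
  moreover have "g (A \<union> C) \<le> g (A \<union> C \<union> D)" by (rule monotone) auto
  moreover have "A \<union> D \<union> C = A \<union> C \<union> D" "D \<union> C = C \<union> D" by auto
  ultimately show ?thesis using assms by simp
qed

lemma determined_mono_cond:
  assumes "g (C \<union> D) = g C" "C \<subseteq> C'"
  shows "g (C' \<union> D) = g C'"
proof -
  have "C' \<union> C \<union> D = C' \<union> D" "C' \<union> C = C'" using assms(2) by auto
  then show ?thesis using determined_extend[OF assms(1), of C'] by simp
qed

lemma determined_diff:
  assumes "g (C \<union> D) = g C"
  shows "g (Q - D \<union> C) = g (Q \<union> C)"
proof -
  have "g (Q \<union> C) \<le> g (Q - D \<union> C \<union> D)" by (rule monotone) auto
  also have "\<dots> = g (Q - D \<union> C)" by (rule determined_extend[OF assms])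
  finally show ?thesis using monotone[of "Q - D \<union> C" "Q \<union> C"] by auto
qed

lemma determined_finite_union:
  assumes "finite I" "\<And>i. i \<in> I \<Longrightarrow> g (C \<union> {i}) = g C"
  shows "g (C \<union> I) = g C"
  using assms
proof (induction I rule: finite_induct)
  case empty
  then show ?case by simp
next
  case (insert i I)
  then have "g ({i} \<union> C \<union> I) = g ({i} \<union> C)" by (intro determined_extend) auto
  moreover have "{i} \<union> C \<union> I = C \<union> insert i I" "{i} \<union> C = C \<union> {i}" by auto
  ultimately show ?case using insert by simp
qed

lemma total_corr_diff_determined:
  assumes "g (C \<union> D) = g C"
  shows "total_corr g C (image_mset (\<lambda>Q. Q - D) Qs) = total_corr g C Qs"
proof -
  have "\<Union>(set_mset (image_mset (\<lambda>Q. Q - D) Qs)) = \<Union>(set_mset Qs) - D" by auto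
  then show ?thesis
    by (simp add: total_corr_def multiset.map_comp comp_def determined_diff[OF assms])
qed

lemma total_corr_cond_determined:
  assumes "g (C \<union> D) = g C"
  shows "total_corr g (C \<union> D) Qs = total_corr g C Qs"
  using determined_extend[OF assms] assms by (simp add: total_corr_def Un_assoc)

lemma total_corr_eq_0_if_cond_mi:
  "(\<And>U Rs. Us = add_mset U Rs \<Longrightarrow> cond_mi g U (\<Union>(set_mset Rs)) C = 0) \<Longrightarrow> total_corr g C Us = 0"
proof (induction Us)
  case empty
  then show ?case by (simp add: total_corr_size_le_1)
next
  case (add U Us)
  have "total_corr g C Us = 0"
  proof (rule add.IH)
    fix V Rs assume "Us = add_mset V Rs"
    then have "cond_mi g V (\<Union>(set_mset (add_mset U Rs))) C = 0"
      using add.prems[of V "add_mset U Rs"] by (simp add: add_mset_commute)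
    moreover have "cond_mi g V (\<Union>(set_mset Rs)) C \<le> cond_mi g V (\<Union>(set_mset (add_mset U Rs))) C"
      by (rule cond_mi_mono) auto
    ultimately show "cond_mi g V (\<Union>(set_mset Rs)) C = 0"
      using cond_mi_nonneg[of V "\<Union>(set_mset Rs)" C] by linarith
  qed
  then show ?case using add.prems by (simp add: total_corr_add_mset)
qed

lemma cond_mi_eq_0_if_total_corr_eq_0:
  "total_corr g C (Xs + Ys) = 0 \<Longrightarrow> cond_mi g (\<Union>(set_mset Xs)) (\<Union>(set_mset Ys)) C = 0"
  using total_corr_union[of C Xs Ys] total_corr_nonneg[of C Xs] total_corr_nonneg[of C Ys]
    cond_mi_nonneg[of "\<Union>(set_mset Xs)" "\<Union>(set_mset Ys)" C]
  by linarith

lemma cond_mi_eq_0_weak_union: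
  assumes "cond_mi g A B C = 0" "C \<subseteq> C2" "C2 \<subseteq> C \<union> A \<union> B"
  shows "cond_mi g A B C2 = 0"
proof -
  define EB where "EB = (C2 - C) \<inter> B"
  define EA where "EA = C2 - C - B"
  have "cond_mi g A B C = cond_mi g A EB C + cond_mi g A B (EB \<union> C)"
    by (rule cond_mi_chain) (auto simp: EB_def)
  then have "cond_mi g B A (EB \<union> C) = 0"
    using assms(1) cond_mi_nonneg[of A EB C] cond_mi_nonneg[of A B "EB \<union> C"] cond_mi_commute[of A B "EB \<union> C"]
    by linarith
  moreover have "cond_mi g B A (EB \<union> C) = cond_mi g B EA (EB \<union> C) + cond_mi g B A (EA \<union> (EB \<union> C))"
    by (rule cond_mi_chain) (use assms(3) in \<open>auto simp: EA_def\<close>)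
  moreover have "EA \<union> (EB \<union> C) = C2" using assms(2) by (auto simp: EA_def EB_def)
  ultimately have "cond_mi g B EA (EB \<union> C) + cond_mi g B A C2 = 0" by simp
  then show ?thesis
    using cond_mi_nonneg[of B EA "EB \<union> C"] cond_mi_nonneg[of B A C2] cond_mi_commute[of A B C2] by linarith
qed

lemma total_corr_eq_0_if_keeps_apart:
  assumes "total_corr g C Ps = 0"
    and disj: "\<And>m. size (filter_mset (\<lambda>P. m \<in> P) Ps) \<le> 1"
    and cover: "\<Union>(set_mset Us) \<subseteq> \<Union>(set_mset Ps)"
    and "C \<subseteq> C2" "C2 \<subseteq> C \<union> \<Union>(set_mset Ps)"
    and apart: "keeps_apart Ps Us"
  shows "total_corr g C2 Us = 0"
proof (rule total_corr_eq_0_if_cond_mi)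
  fix U Rs assume Us: "Us = add_mset U Rs"
  define PU where "PU = filter_mset (\<lambda>P. P \<inter> U \<noteq> {}) Ps"
  define PR where "PR = filter_mset (\<lambda>P. \<not> P \<inter> U \<noteq> {}) Ps"
  have Ps: "Ps = PU + PR" unfolding PU_def PR_def by (rule multiset_partition)
  have "cond_mi g (\<Union>(set_mset PU)) (\<Union>(set_mset PR)) C = 0"
    using assms(1) Ps cond_mi_eq_0_if_total_corr_eq_0 by metis
  moreover have "C2 \<subseteq> C \<union> \<Union>(set_mset PU) \<union> \<Union>(set_mset PR)"
    using assms(5) unfolding PU_def PR_def by auto
  ultimately have "cond_mi g (\<Union>(set_mset PU)) (\<Union>(set_mset PR)) C2 = 0"
    by (rule cond_mi_eq_0_weak_union[OF _ assms(4)])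
  \<comment> \<open>U meets only blocks in PU and, as Ps keeps apart what Us does, the other members only blocks in PR.\<close>
  moreover have "cond_mi g U (\<Union>(set_mset Rs)) C2 \<le> cond_mi g (\<Union>(set_mset PU)) (\<Union>(set_mset PR)) C2"
    using keeps_apart_split[OF disj] cover apart unfolding Us PU_def PR_def by (intro cond_mi_mono)
  ultimately show "cond_mi g U (\<Union>(set_mset Rs)) C2 = 0"
    using cond_mi_nonneg[of U "\<Union>(set_mset Rs)" C2] by linarith
qed

end

section \<open>Canonical forms and the reduction of a sub-CMI\<close>

lemma pur_memberD: "Q \<in># snd (pur K) \<Longrightarrow> Q \<inter> fst K = {} \<and> Q \<noteq> {}"
  by (auto simp: pur_def)

lemma rep_idx_subset: "rep_idx Qs \<subseteq> \<Union>(set_mset Qs)"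
proof
  fix i assume "i \<in> rep_idx Qs"
  then have "filter_mset (\<lambda>Q. i \<in> Q) Qs \<noteq> {#}" by (intro notI) (simp add: rep_idx_def)
  then obtain Q where "Q \<in># filter_mset (\<lambda>Q. i \<in> Q) Qs" by (meson multiset_nonemptyE)
  then show "i \<in> \<Union>(set_mset Qs)" by auto
qed

lemma rep_idxI: "{#A, A#} \<subseteq># Qs \<Longrightarrow> m \<in> A \<Longrightarrow> m \<in> rep_idx Qs"
  unfolding rep_idx_def using size_filter_mset_ge_2[of A A Qs "\<lambda>Q. m \<in> Q"] by auto

lemma IK_subset: "IK K \<subseteq> \<Union>(set_mset (snd K)) - fst K"
  using rep_idx_subset[of "snd (pur K)"] by (auto simp: IK_def pur_def)

lemma size_parts_le: "size (parts I Qs) \<le> size Qs"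
  unfolding parts_def by (metis size_filter_mset_lesseq size_image_mset)

lemma PK_cases: "size (parts (IK K) (snd (pur K))) \<le> 1 \<or> PK K = parts (IK K) (snd (pur K))"
  using size_parts_le[of "IK K" "snd (pur K)"]
  by (auto simp: PK_def canK_def can_pure_def Let_def IK_def)

lemma PK_disjoint_cond: "P \<in># PK K \<Longrightarrow> P \<inter> fst K = {}"
  using pur_memberD[of _ K]
  by (fastforce simp: PK_def canK_def can_pure_def Let_def parts_def split: if_splits option.splits)

lemma PK_eq_pur_if_no_repeats:
  assumes "IK K = {}"
  shows "PK K = snd (pur K)"
proof -
  have "parts {} (snd (pur K)) = snd (pur K)"
    using pur_memberD[of _ K] by (simp add: parts_def filter_mset_eq_conv)
  then show ?thesis using assms by (auto simp: PK_def canK_def can_pure_def Let_def IK_def)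
qed

lemma canK_degCMI: "canK degCMI = None"
  by (simp add: canK_def can_pure_def degCMI_def pur_def)

lemma canK_not_None: "2 \<le> size (snd (pur K)) \<Longrightarrow> canK K \<noteq> None"
  by (auto simp: canK_def can_pure_def Let_def)

lemma parts_rep_idx_disjoint: "size (filter_mset (\<lambda>P. m \<in> P) (parts (rep_idx Qs) Qs)) \<le> 1"
proof -
  let ?I = "rep_idx Qs"
  have "filter_mset (\<lambda>P. m \<in> P) (parts ?I Qs) = image_mset (\<lambda>Q. Q - ?I) (filter_mset (\<lambda>Q. m \<in> Q - ?I) Qs)"
  proof -
    have "filter_mset (\<lambda>P. m \<in> P) (parts ?I Qs) = filter_mset (\<lambda>P. m \<in> P) (image_mset (\<lambda>Q. Q - ?I) Qs)"
      unfolding parts_def filter_filter_mset by (intro filter_mset_cong) auto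
    then show ?thesis by (simp add: filter_mset_image_mset)
  qed
  moreover have "size (filter_mset (\<lambda>Q. m \<in> Q - ?I) Qs) \<le> 1"
  proof (cases "m \<in> ?I")
    case True
    then show ?thesis by simp
  next
    case False
    then show ?thesis by (simp add: rep_idx_def)
  qed
  ultimately show ?thesis by simp
qed

lemma PK_disjoint: "size (filter_mset (\<lambda>P. m \<in> P) (PK K)) \<le> 1"
proof (cases "canK K")
  case None
  then have "size (snd (pur K)) \<le> 1" by (auto simp: canK_def can_pure_def Let_def split: if_splits)
  then show ?thesis using None by (simp add: PK_def) (meson le_trans size_filter_mset_lesseq)
next
  case (Some a)
  then show ?thesis using parts_rep_idx_disjoint[of m "snd (pur K)"]
    by (auto simp: PK_def canK_def can_pure_def Let_def split: if_splits)
qed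

(* The sets T_j in the definition of R_K^{K'}. *)
definition reduced_parts :: "cmi \<Rightarrow> cmi \<Rightarrow> nat set multiset" where
  "reduced_parts K K' = filter_mset (\<lambda>T. T \<noteq> {}) (image_mset (\<lambda>P. P - IK K) (PK K'))"

lemma reduced_parts_memberD: "T \<in># reduced_parts K K' \<Longrightarrow> T \<noteq> {} \<and> T \<inter> fst K' = {}"
  using PK_disjoint_cond[of _ K'] by (auto simp: reduced_parts_def)

lemma RK_has_repeats_if_new_repeats:
  assumes "\<not> IK K' \<subseteq> IK K"
  shows "canK (RK K K') \<noteq> None \<and> IK (RK K K') \<noteq> {}"
proof -
  define D where "D = IK K' - IK K"
  define R where "R = (if size (reduced_parts K K') \<le> 1 then {#} else reduced_parts K K')"
  have RK: "RK K K' = (fst K' - IK K, {#D, D#} + R)"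
    using assms by (auto simp: RK_def reduced_parts_def[symmetric] Let_def D_def R_def)
  have "D - (fst K' - IK K) = D" "D \<noteq> {}"
    using IK_subset[of K'] assms by (auto simp: D_def)
  then have DD: "{#D, D#} \<subseteq># snd (pur (RK K K'))"
    by (simp add: RK pur_def)
  then have "canK (RK K K') \<noteq> None"
    using size_mset_mono[OF DD] by (intro canK_not_None) simp
  moreover obtain m where "m \<in> D" using \<open>D \<noteq> {}\<close> by blast
  then have "m \<in> IK (RK K K')" unfolding IK_def using DD by (intro rep_idxI)
  ultimately show ?thesis by blast
qed

lemma RK_eq_if_no_new_repeats:
  "IK K' \<subseteq> IK K \<Longrightarrow>
    RK K K' = (if size (reduced_parts K K') \<le> 1 then degCMI else (fst K' - IK K, reduced_parts K K'))"
  by (simp add: RK_def reduced_parts_def Let_def)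

lemma pur_reduced_parts: "snd (pur (fst K' - IK K, reduced_parts K K')) = reduced_parts K K'"
proof -
  have "image_mset (\<lambda>Q. Q - (fst K' - IK K)) (reduced_parts K K') = image_mset id (reduced_parts K K')"
    using reduced_parts_memberD[of _ K K'] by (intro image_mset_cong) auto
  then show ?thesis
    using reduced_parts_memberD[of _ K K'] by (simp add: pur_def filter_mset_eq_conv)
qed

lemma sub_cmi_reduction:
  assumes "sub_cmi n K' K" "\<not> degenerate n K'"
  shows "IK K' \<subseteq> IK K" and "fst K \<subseteq> fst K'"
    and "2 \<le> size (reduced_parts K K') \<Longrightarrow> \<Union>(set_mset (reduced_parts K K')) \<subseteq> \<Union>(set_mset (PK K))"
    and "2 \<le> size (reduced_parts K K') \<Longrightarrow> fst K \<subseteq> fst K' - IK K"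
    and "2 \<le> size (reduced_parts K K') \<Longrightarrow> fst K' - IK K \<subseteq> fst K \<union> \<Union>(set_mset (PK K))"
    and "2 \<le> size (reduced_parts K K') \<Longrightarrow> keeps_apart (PK K) (reduced_parts K K')"
proof -
  let ?K'' = "RK K K'" and ?Ts = "reduced_parts K K'"
  have clauses: "(canK ?K'' = None \<and> fst K \<subseteq> fst K') \<or>
    (canK ?K'' \<noteq> None \<and> IK ?K'' = {} \<and> \<Union>(set_mset (PK ?K'')) \<subseteq> \<Union>(set_mset (PK K)) \<and>
     fst K \<subseteq> fst ?K'' \<and> fst ?K'' \<subseteq> fst K \<union> \<Union>(set_mset (PK K)) \<and> keeps_apart (PK K) (PK ?K''))"
    using assms unfolding sub_cmi_def Let_def keeps_apart_def by blast
  \<comment> \<open>New repeated indices would give R_K^{K'} repeated indices, excluded by clauses (ii) and (iii).\<close>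
  show new: "IK K' \<subseteq> IK K" using clauses RK_has_repeats_if_new_repeats by blast
  have nondeg: "?K'' = (fst K' - IK K, ?Ts) \<and> canK ?K'' \<noteq> None" if "2 \<le> size ?Ts"
    using that RK_eq_if_no_new_repeats[OF new] canK_not_None[of ?K''] by (simp add: pur_reduced_parts)
  have deg_RK: "canK ?K'' = None" if "\<not> 2 \<le> size ?Ts"
    using that RK_eq_if_no_new_repeats[OF new] by (simp add: canK_degCMI)
  show "fst K \<subseteq> fst K'" using clauses nondeg deg_RK by fastforce
  have "\<Union>(set_mset ?Ts) \<subseteq> \<Union>(set_mset (PK K)) \<and> fst K \<subseteq> fst K' - IK K \<and>
      fst K' - IK K \<subseteq> fst K \<union> \<Union>(set_mset (PK K)) \<and> keeps_apart (PK K) ?Ts" if Ts: "2 \<le> size ?Ts"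
  proof -
    have c: "IK ?K'' = {} \<and> \<Union>(set_mset (PK ?K'')) \<subseteq> \<Union>(set_mset (PK K)) \<and>
       fst K \<subseteq> fst ?K'' \<and> fst ?K'' \<subseteq> fst K \<union> \<Union>(set_mset (PK K)) \<and> keeps_apart (PK K) (PK ?K'')"
      using clauses nondeg[OF Ts] by blast
    then have "PK ?K'' = ?Ts"
      using nondeg[OF Ts] PK_eq_pur_if_no_repeats[of ?K''] by (simp add: pur_reduced_parts)
    then show ?thesis using c nondeg[OF Ts] by simp
  qed
  then show "2 \<le> size ?Ts \<Longrightarrow> \<Union>(set_mset ?Ts) \<subseteq> \<Union>(set_mset (PK K))"
    and "2 \<le> size ?Ts \<Longrightarrow> fst K \<subseteq> fst K' - IK K"
    and "2 \<le> size ?Ts \<Longrightarrow> fst K' - IK K \<subseteq> fst K \<union> \<Union>(set_mset (PK K))"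
    and "2 \<le> size ?Ts \<Longrightarrow> keeps_apart (PK K) ?Ts"
    by simp_all
qed

section \<open>Sub-CMIs of valid CMIs for monotone submodular functions\<close>

context
  fixes g :: "nat set \<Rightarrow> real"
  assumes "mono_submodular g"
begin

interpretation mono_submodular g by fact

lemma rep_idx_determined:
  assumes "total_corr g C Qs = 0" "finite (rep_idx Qs)"
  shows "g (C \<union> rep_idx Qs) = g C"
proof (rule determined_finite_union[OF assms(2)])
  fix i assume "i \<in> rep_idx Qs"
  then obtain A B where AB: "{#A, B#} \<subseteq># filter_mset (\<lambda>Q. i \<in> Q) Qs"
    by (auto simp: rep_idx_def elim: obtain_pair_subset_mset)
  then have "{#A, B#} \<subseteq># Qs" "i \<in> A" "i \<in> B"
    using multiset_filter_subset subset_mset.order_trans by (blast, auto dest: mset_subset_eqD)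
  then have "cond_mi g {i} {i} C \<le> total_corr g C Qs"
    using cond_mi_mono[of "{i}" A "{i}" B C] total_corr_subset_mset[of "{#A, B#}" Qs C]
    by (simp add: total_corr_pair)
  moreover have "cond_mi g {i} {i} C = g (C \<union> {i}) - g C" by (simp add: cond_mi_def Un_commute)
  moreover have "g C \<le> g (C \<union> {i})" by (rule monotone) auto
  ultimately show "g (C \<union> {i}) = g C" using assms(1) by linarith
qed

lemma total_corr_parts:
  assumes "g (C \<union> I) = g C"
  shows "total_corr g C (parts I Qs) = total_corr g C Qs"
  unfolding parts_def total_corr_filter_nonempty by (rule total_corr_diff_determined[OF assms])

lemma total_corr_pur: "total_corr g (fst K) (snd (pur K)) = total_corr g (fst K) (snd K)"
  unfolding pur_def by (simp add: total_corr_filter_nonempty total_corr_diff_cond)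

lemma IK_determined:
  assumes "total_corr g (fst K) (snd K) = 0" "finite (IK K)"
  shows "g (fst K \<union> IK K) = g (fst K)"
  using rep_idx_determined[of "fst K" "snd (pur K)"] assms by (simp add: total_corr_pur IK_def)

lemma total_corr_PK_eq_0:
  assumes "total_corr g (fst K) (snd K) = 0" "finite (IK K)"
  shows "total_corr g (fst K) (PK K) = 0"
proof -
  have "total_corr g (fst K) (snd (pur K)) = 0" using assms(1) by (simp add: total_corr_pur)
  moreover have "total_corr g (fst K) (parts (IK K) (snd (pur K))) = 0"
    using calculation total_corr_parts[OF IK_determined[OF assms]] by simp
  ultimately show ?thesis
    by (auto simp: PK_def canK_def can_pure_def Let_def IK_def total_corr_size_le_1 split: option.splits if_splits)
qed

lemma total_corr_eq_0_if_reduced: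
  assumes "g (fst K' \<union> IK K) = g (fst K')" "IK K' \<subseteq> IK K"
    and "total_corr g (fst K') (reduced_parts K K') = 0"
  shows "total_corr g (fst K') (snd K') = 0"
proof -
  let ?C' = "fst K'" and ?I' = "IK K'" and ?Qs' = "snd (pur K')"
  have det: "g (?C' \<union> ?I') = g ?C'"
    using assms(1,2) monotone[of ?C' "?C' \<union> ?I'"] monotone[of "?C' \<union> ?I'" "?C' \<union> IK K"] by auto
  have "total_corr g ?C' (parts ?I' ?Qs') = 0"
  proof (cases "size (parts ?I' ?Qs') \<le> 1")
    case True
    then show ?thesis by (rule total_corr_size_le_1)
  next
    case False
    then have "PK K' = parts ?I' ?Qs'" using PK_cases[of K'] by simp
    moreover have "total_corr g ?C' (PK K') = total_corr g ?C' (reduced_parts K K')"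
      unfolding reduced_parts_def total_corr_filter_nonempty
      by (rule total_corr_diff_determined[OF assms(1), symmetric])
    ultimately show ?thesis using assms(3) by simp
  qed
  then show ?thesis by (simp add: total_corr_parts[OF det] total_corr_pur)
qed

lemma total_corr_eq_0_if_sub_cmi:
  assumes "total_corr g (fst K) (snd K) = 0" "finite (IK K)"
    and "sub_cmi n K' K" "\<not> degenerate n K'"
  shows "total_corr g (fst K') (snd K') = 0"
proof -
  note reduction = sub_cmi_reduction[OF assms(3,4)]
  have det: "g (C \<union> IK K) = g C" if "fst K \<subseteq> C" for C
    using determined_mono_cond[OF IK_determined[OF assms(1,2)] that] .
  have "total_corr g (fst K') (reduced_parts K K') = 0"
  proof (cases "2 \<le> size (reduced_parts K K')")
    case True
    let ?C0 = "fst K' - IK K"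
    have "total_corr g (fst K') (reduced_parts K K') = total_corr g (fst K' \<union> IK K) (reduced_parts K K')"
      by (rule total_corr_cond_determined[OF det[OF reduction(2)], symmetric])
    also have "fst K' \<union> IK K = ?C0 \<union> IK K" by auto
    also have "total_corr g (?C0 \<union> IK K) (reduced_parts K K') = total_corr g ?C0 (reduced_parts K K')"
      by (rule total_corr_cond_determined[OF det[OF reduction(4)[OF True]]])
    also have "\<dots> = 0"
      by (rule total_corr_eq_0_if_keeps_apart[OF total_corr_PK_eq_0[OF assms(1,2)] PK_disjoint reduction(3-6)[OF True]])
    finally show ?thesis .
  next
    case False
    then show ?thesis by (simp add: total_corr_size_le_1)
  qed
  then show ?thesis
    using total_corr_eq_0_if_reduced det[OF reduction(2)] reduction(1) by blast
qed

end

section \<open>Submodularity of entropy\<close>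

definition self_info :: "'w pmf \<Rightarrow> ('w \<Rightarrow> 'b) \<Rightarrow> 'w \<Rightarrow> real" where
  "self_info M Y \<omega> = - log 2 (pmf (map_pmf Y M) (Y \<omega>))"

lemma minus_log2_nonneg: "0 \<le> (x::real) \<Longrightarrow> x \<le> 1 \<Longrightarrow> 0 \<le> - log 2 x"
  by (cases "x = 0") (auto simp: log_def divide_nonpos_pos)

lemma self_info_nonneg: "0 \<le> self_info M Y \<omega>"
  unfolding self_info_def by (rule minus_log2_nonneg) (auto simp: pmf_le_1)

lemma measure_pmf_integral_infsum:
  fixes p :: "'a pmf" and f :: "'a \<Rightarrow> real"
  assumes "\<And>x. 0 \<le> f x"
  shows "integrable p f \<longleftrightarrow> (\<lambda>x. pmf p x * f x) summable_on UNIV"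
    and "integral\<^sup>L p f = infsum (\<lambda>x. pmf p x * f x) UNIV"
proof -
  have nn: "\<And>x. norm (pmf p x * f x) = pmf p x * f x" using assms by auto
  have summable: "integrable (count_space UNIV) (\<lambda>x. pmf p x * f x) \<longleftrightarrow> (\<lambda>x. pmf p x * f x) summable_on UNIV"
    using abs_summable_equivalent[of "\<lambda>x. pmf p x * f x" UNIV] nn by (simp add: abs_summable_on_def)
  show "integrable p f \<longleftrightarrow> (\<lambda>x. pmf p x * f x) summable_on UNIV"
    unfolding measure_pmf_eq_density by (subst integrable_density) (auto simp: summable)
  have e: "integral\<^sup>L p f = integral\<^sup>L (count_space UNIV) (\<lambda>x. pmf p x * f x)"
    unfolding measure_pmf_eq_density by (subst integral_density) auto
  show "integral\<^sup>L p f = infsum (\<lambda>x. pmf p x * f x) UNIV"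
  proof (cases "(\<lambda>x. pmf p x * f x) summable_on UNIV")
    case True
    then have "Infinite_Set_Sum.abs_summable_on (\<lambda>x. pmf p x * f x) UNIV"
      using abs_summable_equivalent[of "\<lambda>x. pmf p x * f x" UNIV] nn by simp
    then show ?thesis using e infsetsum_infsum[of "\<lambda>x. pmf p x * f x" UNIV] by (simp add: infsetsum_def)
  next
    case False
    then show ?thesis using e summable by (simp add: infsum_not_exists not_integrable_integral_eq)
  qed
qed

lemma ent_as_expectation:
  shows "ent_finite M Y \<longleftrightarrow> integrable M (self_info M Y)"
    and "ent M Y = integral\<^sup>L M (self_info M Y)"
proof -
  let ?f = "\<lambda>y. - log 2 (pmf (map_pmf Y M) y)"
  have nonneg: "0 \<le> ?f y" for y by (rule minus_log2_nonneg) (auto simp: pmf_le_1)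
  have "integrable M (self_info M Y) \<longleftrightarrow> integrable (map_pmf Y M) ?f"
    by (simp add: self_info_def[abs_def])
  then show "ent_finite M Y \<longleftrightarrow> integrable M (self_info M Y)"
    unfolding measure_pmf_integral_infsum(1)[OF nonneg] ent_finite_def by simp
  have "integral\<^sup>L M (self_info M Y) = integral\<^sup>L (map_pmf Y M) ?f"
    by (simp add: self_info_def[abs_def])
  then show "ent M Y = integral\<^sup>L M (self_info M Y)"
    unfolding measure_pmf_integral_infsum(2)[OF nonneg] ent_def by simp
qed

lemma ent_map_pmf_inj:
  assumes "\<And>\<omega>. \<omega> \<in> set_pmf M \<Longrightarrow> U (f \<omega>) = F (V \<omega>)" and "inj_on F (V ` set_pmf M)"
  shows "ent (map_pmf f M) U = ent M V" and "ent_finite (map_pmf f M) U \<longleftrightarrow> ent_finite M V"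
proof -
  have "map_pmf U (map_pmf f M) = map_pmf F (map_pmf V M)"
    unfolding map_pmf_comp using assms(1) by (intro map_pmf_cong) auto
  then have "self_info (map_pmf f M) U (f \<omega>) = self_info M V \<omega>" if "\<omega> \<in> set_pmf M" for \<omega>
    using that assms by (simp add: self_info_def pmf_map_inj)
  then have ae: "AE \<omega> in M. self_info (map_pmf f M) U (f \<omega>) = self_info M V \<omega>"
    by (simp add: AE_measure_pmf_iff)
  show "ent (map_pmf f M) U = ent M V"
    unfolding ent_as_expectation integral_map_pmf by (rule integral_cong_AE) (use ae in auto)
  show "ent_finite (map_pmf f M) U \<longleftrightarrow> ent_finite M V"
    unfolding ent_as_expectation integrable_map_pmf_eq by (rule integrable_cong_AE) (use ae in auto)
qed

corollary ent_inj_cong: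
  assumes "\<And>\<omega>. \<omega> \<in> set_pmf M \<Longrightarrow> U \<omega> = F (V \<omega>)" and "inj_on F (V ` set_pmf M)"
  shows "ent M U = ent M V" and "ent_finite M U \<longleftrightarrow> ent_finite M V"
proof -
  have "U (id \<omega>) = F (V \<omega>)" if "\<omega> \<in> set_pmf M" for \<omega> using assms(1) that by simp
  from ent_map_pmf_inj[where f = id, OF this assms(2)] show "ent M U = ent M V" "ent_finite M U \<longleftrightarrow> ent_finite M V"
    by simp_all
qed

lemma sum_pmf_le_1: "finite F \<Longrightarrow> sum (pmf p) F \<le> 1"
  by (metis measure_measure_pmf_finite measure_pmf.prob_le_1)

lemma sum_pmf_pair_le:
  assumes "finite F"
  shows "(\<Sum>y\<in>F. pmf (map_pmf (\<lambda>\<omega>. (Y \<omega>, W \<omega>)) M) (y, w)) \<le> pmf (map_pmf W M) w"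
proof -
  let ?p = "map_pmf (\<lambda>\<omega>. (Y \<omega>, W \<omega>)) M"
  have "(\<Sum>y\<in>F. pmf ?p (y, w)) = sum (pmf ?p) ((\<lambda>y. (y, w)) ` F)"
    by (subst sum.reindex) (auto simp: inj_on_def)
  also have "\<dots> = measure ?p ((\<lambda>y. (y, w)) ` F)"
    using assms by (subst measure_measure_pmf_finite) auto
  also have "\<dots> \<le> measure ?p (UNIV \<times> {w})"
    by (rule measure_pmf.finite_measure_mono) auto
  also have "\<dots> = pmf (map_pmf W M) w"
    by (simp add: pmf_map vimage_def)
  finally show ?thesis .
qed

(* The mass function p(y,w) p(z,w) / p(w) of the coupling of Y and Z that is conditionally
   independent given W; it is a sub-probability (it is 0 where p(w) = 0). *)
definition cond_indep_coupling :: "'w pmf \<Rightarrow> ('w \<Rightarrow> 'a) \<Rightarrow> ('w \<Rightarrow> 'b) \<Rightarrow> ('w \<Rightarrow> 'c) \<Rightarrow> 'a \<times> 'b \<times> 'c \<Rightarrow> real" where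
  "cond_indep_coupling M Y Z W = (\<lambda>(y, z, w).
     pmf (map_pmf (\<lambda>\<omega>. (Y \<omega>, W \<omega>)) M) (y, w) * pmf (map_pmf (\<lambda>\<omega>. (Z \<omega>, W \<omega>)) M) (z, w) / pmf (map_pmf W M) w)"

lemma cond_indep_coupling_nonneg: "0 \<le> cond_indep_coupling M Y Z W x"
  by (auto simp: cond_indep_coupling_def split: prod.splits)

lemma sum_cond_indep_coupling_le_1:
  assumes "finite F"
  shows "sum (cond_indep_coupling M Y Z W) F \<le> 1"
proof -
  let ?r = "cond_indep_coupling M Y Z W"
  let ?b = "pmf (map_pmf (\<lambda>\<omega>. (Y \<omega>, W \<omega>)) M)" and ?c = "pmf (map_pmf (\<lambda>\<omega>. (Z \<omega>, W \<omega>)) M)"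
    and ?d = "pmf (map_pmf W M)"
  define Fy where "Fy = fst ` F"
  define Fz where "Fz = fst ` snd ` F"
  define Fw where "Fw = snd ` snd ` F"
  have fin: "finite Fy" "finite Fz" "finite Fw" using assms by (auto simp: Fy_def Fz_def Fw_def)
  have "F \<subseteq> Fy \<times> Fz \<times> Fw" unfolding Fy_def Fz_def Fw_def by force
  then have "sum ?r F \<le> sum ?r (Fy \<times> Fz \<times> Fw)"
    using fin by (intro sum_mono2) (auto simp: cond_indep_coupling_nonneg)
  also have "\<dots> = (\<Sum>y\<in>Fy. \<Sum>z\<in>Fz. \<Sum>w\<in>Fw. ?r (y, z, w))"
    by (simp add: sum.cartesian_product)
  also have "\<dots> = (\<Sum>w\<in>Fw. \<Sum>y\<in>Fy. \<Sum>z\<in>Fz. ?r (y, z, w))"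
    by (subst sum.swap) (subst (2) sum.swap, rule refl)
  also have "\<dots> = (\<Sum>w\<in>Fw. (\<Sum>y\<in>Fy. ?b (y, w)) * (\<Sum>z\<in>Fz. ?c (z, w)) / ?d w)"
    by (simp add: cond_indep_coupling_def sum_product sum_divide_distrib)
  also have "\<dots> \<le> (\<Sum>w\<in>Fw. ?d w)"
  proof (rule sum_mono)
    fix w
    have "(\<Sum>y\<in>Fy. ?b (y, w)) * (\<Sum>z\<in>Fz. ?c (z, w)) \<le> ?d w * ?d w"
      using sum_pmf_pair_le[OF fin(1)] sum_pmf_pair_le[OF fin(2)] by (intro mult_mono sum_nonneg) auto
    then show "(\<Sum>y\<in>Fy. ?b (y, w)) * (\<Sum>z\<in>Fz. ?c (z, w)) / ?d w \<le> ?d w"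
      by (cases "?d w = 0") (auto simp: divide_le_eq order_less_le)
  qed
  also have "\<dots> \<le> 1" by (rule sum_pmf_le_1[OF fin(3)])
  finally show ?thesis .
qed

definition coupling_ratio :: "'w pmf \<Rightarrow> ('w \<Rightarrow> 'a) \<Rightarrow> ('w \<Rightarrow> 'b) \<Rightarrow> ('w \<Rightarrow> 'c) \<Rightarrow> 'w \<Rightarrow> real" where
  "coupling_ratio M Y Z W \<omega> =
     cond_indep_coupling M Y Z W (Y \<omega>, Z \<omega>, W \<omega>) / pmf (map_pmf (\<lambda>\<omega>. (Y \<omega>, Z \<omega>, W \<omega>)) M) (Y \<omega>, Z \<omega>, W \<omega>)"

lemma coupling_ratio_integral:
  fixes M :: "'w pmf"
  shows "integrable M (coupling_ratio M Y Z W)" and "integral\<^sup>L M (coupling_ratio M Y Z W) \<le> 1"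
proof -
  define J where "J = map_pmf (\<lambda>\<omega>. (Y \<omega>, Z \<omega>, W \<omega>)) M"
  define r where "r = cond_indep_coupling M Y Z W"
  define q where "q x = r x / pmf J x" for x
  have ratio: "coupling_ratio M Y Z W = (\<lambda>\<omega>. q (Y \<omega>, Z \<omega>, W \<omega>))"
    by (simp add: fun_eq_iff coupling_ratio_def q_def r_def J_def)
  have r0: "0 \<le> r x" and q0: "0 \<le> q x" for x
    by (simp_all add: r_def q_def cond_indep_coupling_nonneg)
  have r_summable: "r summable_on UNIV"
    using r0 sum_cond_indep_coupling_le_1[of _ M Y Z W] unfolding r_def
    by (intro nonneg_bdd_above_summable_on) (auto simp: bdd_above_def)
  have "infsum r UNIV \<le> 1"
    using sum_cond_indep_coupling_le_1[of _ M Y Z W] unfolding r_def by (intro infsum_le_finite_sums r_summable[unfolded r_def]) auto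
  have dominated: "pmf J x * q x \<le> r x" for x
    using r0[of x] by (cases "pmf J x = 0") (simp_all add: q_def)
  have summable: "(\<lambda>x. pmf J x * q x) summable_on UNIV"
    using q0 dominated by (intro summable_on_comparison_test[OF r_summable]) auto
  then have "integrable J q" using measure_pmf_integral_infsum(1)[of q J] q0 by simp
  then show "integrable M (coupling_ratio M Y Z W)" unfolding ratio J_def by simp
  have "integral\<^sup>L M (coupling_ratio M Y Z W) = integral\<^sup>L J q" unfolding ratio J_def by simp
  also have "\<dots> = infsum (\<lambda>x. pmf J x * q x) UNIV" using measure_pmf_integral_infsum(2)[of q J] q0 by simp
  also have "\<dots> \<le> infsum r UNIV" using dominated by (intro infsum_mono summable r_summable)
  also have "\<dots> \<le> 1" by fact
  finally show "integral\<^sup>L M (coupling_ratio M Y Z W) \<le> 1" .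
qed

lemma log2_le_minus_one: "0 < (x::real) \<Longrightarrow> log 2 x \<le> (x - 1) / ln 2"
  unfolding log_def by (intro divide_right_mono ln_le_minus_one) auto

lemma self_info_le_coupling_ratio:
  assumes "\<omega> \<in> set_pmf M"
  shows "self_info M (\<lambda>\<omega>. (Y \<omega>, Z \<omega>, W \<omega>)) \<omega> + self_info M W \<omega>
    \<le> self_info M (\<lambda>\<omega>. (Y \<omega>, W \<omega>)) \<omega> + self_info M (\<lambda>\<omega>. (Z \<omega>, W \<omega>)) \<omega> + (coupling_ratio M Y Z W \<omega> - 1) / ln 2"
proof -
  define a where "a = pmf (map_pmf (\<lambda>\<omega>. (Y \<omega>, Z \<omega>, W \<omega>)) M) (Y \<omega>, Z \<omega>, W \<omega>)"
  define b where "b = pmf (map_pmf (\<lambda>\<omega>. (Y \<omega>, W \<omega>)) M) (Y \<omega>, W \<omega>)"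
  define c where "c = pmf (map_pmf (\<lambda>\<omega>. (Z \<omega>, W \<omega>)) M) (Z \<omega>, W \<omega>)"
  define d where "d = pmf (map_pmf W M) (W \<omega>)"
  have pos: "a > 0" "b > 0" "c > 0" "d > 0"
    unfolding a_def b_def c_def d_def using assms by (auto intro!: pmf_positive)
  have ratio: "coupling_ratio M Y Z W \<omega> = b * c / (a * d)"
    by (simp add: coupling_ratio_def cond_indep_coupling_def a_def b_def c_def d_def)
  have "log 2 (b * c / (a * d)) = log 2 b + log 2 c - log 2 a - log 2 d"
    using pos by (simp add: log_mult log_divide)
  moreover have "log 2 (b * c / (a * d)) \<le> (b * c / (a * d) - 1) / ln 2"
    using pos by (intro log2_le_minus_one) simp
  ultimately show ?thesis
    unfolding ratio by (simp add: self_info_def a_def b_def c_def d_def)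
qed

lemma ent_finite_triple:
  assumes "ent_finite M (\<lambda>\<omega>. (Y \<omega>, W \<omega>))" and "ent_finite M (\<lambda>\<omega>. (Z \<omega>, W \<omega>))"
  shows "ent_finite M (\<lambda>\<omega>. (Y \<omega>, Z \<omega>, W \<omega>))"
proof -
  let ?A = "self_info M (\<lambda>\<omega>. (Y \<omega>, Z \<omega>, W \<omega>))" and ?B = "self_info M (\<lambda>\<omega>. (Y \<omega>, W \<omega>))"
    and ?C = "self_info M (\<lambda>\<omega>. (Z \<omega>, W \<omega>))" and ?q = "coupling_ratio M Y Z W"
  have ln2: "ln (2::real) > 0" by simp
  have bound: "norm (?A \<omega>) \<le> norm (?B \<omega> + ?C \<omega> + ?q \<omega> / ln 2)" if "\<omega> \<in> set_pmf M" for \<omega>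
  proof -
    have "(?q \<omega> - 1) / ln 2 \<le> ?q \<omega> / ln 2" using ln2 by (intro divide_right_mono) auto
    then have "?A \<omega> \<le> ?B \<omega> + ?C \<omega> + ?q \<omega> / ln 2"
      using self_info_le_coupling_ratio[OF that, of Y Z W] self_info_nonneg[of M W \<omega>] by linarith
    moreover have "0 \<le> ?q \<omega>" by (simp add: coupling_ratio_def cond_indep_coupling_nonneg)
    ultimately show ?thesis using self_info_nonneg[of M "\<lambda>\<omega>. (Y \<omega>, Z \<omega>, W \<omega>)" \<omega>] by simp
  qed
  have "integrable M ?A"
  proof (rule Bochner_Integration.integrable_bound[where f = "\<lambda>\<omega>. ?B \<omega> + ?C \<omega> + ?q \<omega> / ln 2"])
    show "integrable M (\<lambda>\<omega>. ?B \<omega> + ?C \<omega> + ?q \<omega> / ln 2)"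
      using assms coupling_ratio_integral(1)[of M Y Z W] by (simp add: ent_as_expectation)
    show "AE \<omega> in M. norm (?A \<omega>) \<le> norm (?B \<omega> + ?C \<omega> + ?q \<omega> / ln 2)"
      using bound by (simp add: AE_measure_pmf_iff)
  qed simp
  then show ?thesis by (simp add: ent_as_expectation)
qed

(* Gibbs' inequality: E[log2 ratio] \<le> (E[ratio] - 1) / ln 2 \<le> 0 for the coupling ratio. *)
lemma ent_submodular:
  assumes YW: "ent_finite M (\<lambda>\<omega>. (Y \<omega>, W \<omega>))" and ZW: "ent_finite M (\<lambda>\<omega>. (Z \<omega>, W \<omega>))"
    and W: "ent_finite M W"
  shows "ent M (\<lambda>\<omega>. (Y \<omega>, Z \<omega>, W \<omega>)) + ent M W \<le> ent M (\<lambda>\<omega>. (Y \<omega>, W \<omega>)) + ent M (\<lambda>\<omega>. (Z \<omega>, W \<omega>))"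
proof -
  let ?A = "self_info M (\<lambda>\<omega>. (Y \<omega>, Z \<omega>, W \<omega>))" and ?B = "self_info M (\<lambda>\<omega>. (Y \<omega>, W \<omega>))"
    and ?C = "self_info M (\<lambda>\<omega>. (Z \<omega>, W \<omega>))" and ?D = "self_info M W" and ?q = "coupling_ratio M Y Z W"
  note int = ent_finite_triple[OF YW ZW, unfolded ent_as_expectation] YW[unfolded ent_as_expectation]
    ZW[unfolded ent_as_expectation] W[unfolded ent_as_expectation] coupling_ratio_integral(1)[of M Y Z W]
  have "integral\<^sup>L M ?A \<le> integral\<^sup>L M (\<lambda>\<omega>. ?B \<omega> + ?C \<omega> - ?D \<omega> + (?q \<omega> / ln 2 - 1 / ln 2))"
  proof (intro integral_mono_AE)
    show "AE \<omega> in M. ?A \<omega> \<le> ?B \<omega> + ?C \<omega> - ?D \<omega> + (?q \<omega> / ln 2 - 1 / ln 2)"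
      unfolding AE_measure_pmf_iff
      using self_info_le_coupling_ratio[of _ M Y Z W] by (simp add: diff_divide_distrib algebra_simps)
  qed (use int in auto)
  also have "\<dots> = integral\<^sup>L M ?B + integral\<^sup>L M ?C - integral\<^sup>L M ?D + (integral\<^sup>L M ?q / ln 2 - 1 / ln 2)"
    using int by (simp add: measure_pmf.prob_space)
  also have "\<dots> \<le> integral\<^sup>L M ?B + integral\<^sup>L M ?C - integral\<^sup>L M ?D"
    using coupling_ratio_integral(2)[of M Y Z W] by (simp add: divide_right_mono)
  finally show ?thesis by (simp add: ent_as_expectation)
qed

section \<open>Joint entropies and degenerate CMIs\<close>

lemma inj_on_restricts:
  assumes "\<And>s t. f s = f t \<Longrightarrow> \<forall>i\<in>S. s i = t i"
  shows "inj_on f (extensional S)"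
  using assms by (intro inj_onI extensionalityI) auto

lemma ent_jointRV_pair:
  "ent M (\<lambda>\<omega>. (jointRV X A \<omega>, jointRV X C \<omega>)) = H M X (A \<union> C)"
  "ent_finite M (\<lambda>\<omega>. (jointRV X A \<omega>, jointRV X C \<omega>)) \<longleftrightarrow> ent_finite M (jointRV X (A \<union> C))"
proof -
  have "inj_on (\<lambda>t. (restrict t A, restrict t C)) (extensional (A \<union> C))"
    by (rule inj_on_restricts) (auto simp: fun_eq_iff restrict_def split: if_splits)
  then have inj: "inj_on (\<lambda>t. (restrict t A, restrict t C)) (jointRV X (A \<union> C) ` set_pmf M)"
    by (rule inj_on_subset) (auto simp: jointRV_def)
  have "(jointRV X A \<omega>, jointRV X C \<omega>) = (\<lambda>t. (restrict t A, restrict t C)) (jointRV X (A \<union> C) \<omega>)" for \<omega>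
    by (auto simp: jointRV_def restrict_def fun_eq_iff)
  from ent_inj_cong[OF this inj] show "ent M (\<lambda>\<omega>. (jointRV X A \<omega>, jointRV X C \<omega>)) = H M X (A \<union> C)"
    "ent_finite M (\<lambda>\<omega>. (jointRV X A \<omega>, jointRV X C \<omega>)) \<longleftrightarrow> ent_finite M (jointRV X (A \<union> C))"
    unfolding H_def .
qed

lemma ent_jointRV_triple:
  "ent M (\<lambda>\<omega>. (jointRV X A \<omega>, jointRV X B \<omega>, jointRV X C \<omega>)) = H M X (A \<union> B \<union> C)"
  "ent_finite M (\<lambda>\<omega>. (jointRV X A \<omega>, jointRV X B \<omega>, jointRV X C \<omega>)) \<longleftrightarrow> ent_finite M (jointRV X (A \<union> B \<union> C))"
proof -
  have "inj_on (\<lambda>t. (restrict t A, restrict t B, restrict t C)) (extensional (A \<union> B \<union> C))"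
    by (rule inj_on_restricts) (auto simp: fun_eq_iff restrict_def split: if_splits)
  then have inj: "inj_on (\<lambda>t. (restrict t A, restrict t B, restrict t C)) (jointRV X (A \<union> B \<union> C) ` set_pmf M)"
    by (rule inj_on_subset) (auto simp: jointRV_def)
  have "(jointRV X A \<omega>, jointRV X B \<omega>, jointRV X C \<omega>)
      = (\<lambda>t. (restrict t A, restrict t B, restrict t C)) (jointRV X (A \<union> B \<union> C) \<omega>)" for \<omega>
    by (auto simp: jointRV_def restrict_def fun_eq_iff)
  from ent_inj_cong[OF this inj] show "ent M (\<lambda>\<omega>. (jointRV X A \<omega>, jointRV X B \<omega>, jointRV X C \<omega>)) = H M X (A \<union> B \<union> C)"
    "ent_finite M (\<lambda>\<omega>. (jointRV X A \<omega>, jointRV X B \<omega>, jointRV X C \<omega>)) \<longleftrightarrow> ent_finite M (jointRV X (A \<union> B \<union> C))"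
    unfolding H_def .
qed

lemma H_submodular:
  assumes "ent_finite M (jointRV X (A \<union> C))" "ent_finite M (jointRV X (B \<union> C))" "ent_finite M (jointRV X C)"
  shows "ent_finite M (jointRV X (A \<union> B \<union> C))"
    and "H M X (A \<union> B \<union> C) + H M X C \<le> H M X (A \<union> C) + H M X (B \<union> C)"
  using ent_finite_triple[of M "jointRV X A" "jointRV X C" "jointRV X B"]
    ent_submodular[of M "jointRV X A" "jointRV X C" "jointRV X B"] assms
  by (simp_all add: ent_jointRV_pair ent_jointRV_triple H_def)

lemma ent_finite_const: "ent_finite M (\<lambda>\<omega>. c)"
  unfolding ent_as_expectation by (simp add: self_info_def[abs_def] map_pmf_const)

lemma ent_finite_jointRV_singleton: "ent_finite M (jointRV X {i}) \<longleftrightarrow> ent_finite M (X i)"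
proof (rule ent_inj_cong(2))
  show "jointRV X {i} \<omega> = (\<lambda>v j. if j = i then v else undefined) (X i \<omega>)" for \<omega>
    by (auto simp: jointRV_def fun_eq_iff)
  show "inj_on (\<lambda>v j. if j = i then v else undefined) (X i ` set_pmf M)"
    by (auto simp: inj_on_def fun_eq_iff)
qed

lemma ent_finite_jointRV:
  assumes "finite_entropies n M X" "A \<subseteq> {1..n}"
  shows "ent_finite M (jointRV X A)"
proof -
  have "finite A" using assms(2) finite_subset by blast
  have empty: "ent_finite M (jointRV X {})"
  proof -
    have "jointRV X {} = (\<lambda>\<omega> i. undefined)" by (auto simp: jointRV_def fun_eq_iff)
    then show ?thesis by (simp add: ent_finite_const)
  qed
  show ?thesis using \<open>finite A\<close> assms(2)
  proof (induction A rule: finite_induct)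
    case (insert i A)
    have "ent_finite M (jointRV X (A \<union> {}))" "ent_finite M (jointRV X ({i} \<union> {}))"
      using insert assms(1) by (auto simp: finite_entropies_def ent_finite_jointRV_singleton)
    from H_submodular(1)[OF this empty] show ?case by (simp add: insert_commute)
  qed (rule empty)
qed

(* Only X_1, ..., X_n have finite entropy; intersecting with {1..n} makes g finite everywhere. *)
lemma mono_submodular_H:
  assumes "finite_entropies n M X"
  shows "mono_submodular (\<lambda>A. H M X (A \<inter> {1..n}))"
proof -
  let ?N = "{1..n::nat}"
  have submodular: "H M X ((A \<union> B \<union> C) \<inter> ?N) + H M X (C \<inter> ?N) \<le> H M X ((A \<union> C) \<inter> ?N) + H M X ((B \<union> C) \<inter> ?N)"
    for A B C
  proof -
    have "H M X (A \<inter> ?N \<union> B \<inter> ?N \<union> C \<inter> ?N) + H M X (C \<inter> ?N)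
        \<le> H M X (A \<inter> ?N \<union> C \<inter> ?N) + H M X (B \<inter> ?N \<union> C \<inter> ?N)"
      by (rule H_submodular(2)) (auto intro!: ent_finite_jointRV[OF assms])
    then show ?thesis by (simp flip: Int_Un_distrib2)
  qed
  have "H M X (A \<inter> ?N) \<le> H M X (B \<inter> ?N)" if "A \<subseteq> B" for A B
  proof -
    have "B \<union> B \<union> A = B" "B \<union> A = B" using that by auto
    then show ?thesis using submodular[of B B A] by simp
  qed
  with submodular show ?thesis by unfold_locales
qed

lemma valid_iff_total_corr_eq_0: "valid M X K \<longleftrightarrow> total_corr (H M X) (fst K) (snd K) = 0"
  by (simp add: valid_def condH_def total_corr_def)

lemma total_corr_restrict:
  assumes "C \<subseteq> N" "\<And>Q. Q \<in># Qs \<Longrightarrow> Q \<subseteq> N"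
  shows "total_corr (\<lambda>A. g (A \<inter> N)) C Qs = total_corr g C Qs"
proof -
  have "image_mset (\<lambda>Q. g ((Q \<union> C) \<inter> N) - g (C \<inter> N)) Qs = image_mset (\<lambda>Q. g (Q \<union> C) - g C) Qs"
    using assms by (intro image_mset_cong) (simp add: Int_absorb2)
  moreover have "(\<Union>(set_mset Qs) \<union> C) \<inter> N = \<Union>(set_mset Qs) \<union> C" "C \<inter> N = C" using assms by auto
  ultimately show ?thesis by (simp add: total_corr_def)
qed

(* Needed because degenerate only quantifies over nat-valued variables on the sample space nat. *)
lemma nat_relabelling:
  fixes M :: "'w pmf" and X :: "nat \<Rightarrow> 'w \<Rightarrow> 'v"
  obtains M' :: "nat pmf" and X' :: "nat \<Rightarrow> nat \<Rightarrow> nat"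
  where "\<And>A. H M' X' A = H M X A" and "\<And>A. ent_finite M' (jointRV X' A) \<longleftrightarrow> ent_finite M (jointRV X A)"
proof -
  define S where "S = set_pmf M"
  define V where "V = (\<Union>i. X i ` S)"
  have S: "countable S" and V: "countable V" unfolding S_def V_def by auto
  define X' where "X' i m = to_nat_on V (X i (from_nat_into S m))" for i m
  have "H (map_pmf (to_nat_on S) M) X' A = H M X A \<and>
      (ent_finite (map_pmf (to_nat_on S) M) (jointRV X' A) \<longleftrightarrow> ent_finite M (jointRV X A))" for A
  proof -
    define F where "F r = restrict (\<lambda>i. to_nat_on V (r i)) A" for r :: "nat \<Rightarrow> 'v"
    have "jointRV X' A (to_nat_on S \<omega>) = F (jointRV X A \<omega>)" if "\<omega> \<in> set_pmf M" for \<omega>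
      using that from_nat_into_to_nat_on[OF S] by (auto simp: jointRV_def X'_def F_def S_def)
    moreover have "inj_on F (jointRV X A ` set_pmf M)"
    proof (rule inj_onI)
      fix r s assume "r \<in> jointRV X A ` set_pmf M" "s \<in> jointRV X A ` set_pmf M" and Frs: "F r = F s"
      then obtain \<omega>1 \<omega>2 where \<omega>: "\<omega>1 \<in> S" "\<omega>2 \<in> S" and rs: "r = jointRV X A \<omega>1" "s = jointRV X A \<omega>2"
        unfolding S_def by blast
      show "r = s"
      proof (rule extensionalityI[of _ A])
        show "r \<in> extensional A" "s \<in> extensional A" unfolding rs by (simp_all add: jointRV_def)
        fix i assume "i \<in> A"
        then have "to_nat_on V (r i) = to_nat_on V (s i)" using fun_cong[OF Frs, of i] by (simp add: F_def)
        then have "X i \<omega>1 = X i \<omega>2"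
          using \<open>i \<in> A\<close> \<omega> inj_on_to_nat_on[OF V] unfolding rs by (auto simp: jointRV_def V_def dest: inj_onD)
        then show "r i = s i" unfolding rs by (simp add: jointRV_def)
      qed
    qed
    ultimately show ?thesis unfolding H_def by (metis ent_map_pmf_inj)
  qed
  then show thesis by (intro that) blast+
qed

lemma valid_if_degenerate:
  assumes "degenerate n K" and "finite_entropies n M X"
  shows "valid M X K"
proof -
  obtain M' :: "nat pmf" and X' :: "nat \<Rightarrow> nat \<Rightarrow> nat"
    where H: "\<And>A. H M' X' A = H M X A" and fin: "\<And>A. ent_finite M' (jointRV X' A) \<longleftrightarrow> ent_finite M (jointRV X A)"
    using nat_relabelling[of M X] by blast
  have "finite_entropies n M' X'"
    using assms(2) fin by (simp add: finite_entropies_def flip: ent_finite_jointRV_singleton)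
  then have "valid M' X' K" using assms(1) by (simp add: degenerate_def)
  then show ?thesis by (simp add: valid_def condH_def H)
qed

theorem mainTheorem13:
  fixes M :: "'w pmf" and X :: "nat \<Rightarrow> 'w \<Rightarrow> 'v" and n :: nat and K K' :: cmi
  assumes "wf_cmi n K" and "wf_cmi n K'"
    and "sub_cmi n K' K"
    and "finite_entropies n M X"
    and "valid M X K"
  shows "valid M X K'"
proof (cases "degenerate n K'")
  case True
  then show ?thesis using assms(4) by (rule valid_if_degenerate)
next
  case False
  let ?g = "\<lambda>A. H M X (A \<inter> {1..n})"
  have valid_iff: "valid M X L \<longleftrightarrow> total_corr ?g (fst L) (snd L) = 0" if "wf_cmi n L" for L
  proof -
    have "total_corr ?g (fst L) (snd L) = total_corr (H M X) (fst L) (snd L)"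
      using that unfolding wf_cmi_def by (intro total_corr_restrict) auto
    then show ?thesis by (simp add: valid_iff_total_corr_eq_0)
  qed
  have "IK K \<subseteq> {1..n}" using IK_subset[of K] assms(1) by (auto simp: wf_cmi_def)
  then have "finite (IK K)" by (rule finite_subset) simp
  moreover have "total_corr ?g (fst K) (snd K) = 0" using assms(5) valid_iff[OF assms(1)] by simp
  ultimately have "total_corr ?g (fst K') (snd K') = 0"
    using total_corr_eq_0_if_sub_cmi[OF mono_submodular_H[OF assms(4)] _ _ assms(3) False] by blast
  then show ?thesis using valid_iff[OF assms(2)] by simp
qed

end
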